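(* Let $n\ge1$, let $H_n:\mathbb{Z}^n\to\mathbb{R}$ be a finitely supported kernel and $x,y:\mathbb{Z}\to\mathbb{R}$ finitely supported signals. Then $$\big\|H_n*(x+y)^n-H_n*x^n\big\|_2\le\min\left(\|H_n\|_2\sum_{k=0}^{n-1}\Big(\frac{en}{k}\Big)^k\|x\|_1^k\|y\|_1^{n-k},\ \|H_n\|_1\sum_{k=0}^{n-1}\Big(\frac{en}{k}\Big)^k\|x\|_{2k}^k\|y\|_{2(n-k)}^{n-k}\right),$$ where $e$ is the base of the natural logarithm.
   Context: For a kernel $H:\mathbb{Z}^n\to\mathbb{R}$ and signals $x_1,\dots,x_n:\mathbb{Z}\to\mathbb{R}$, the order-$n$ convolution is $(H*[x_1,\dots,x_n])(t)=\sum_{(\tau_1,\dots,\tau_n)\in\mathbb{Z}^n}H(\tau_1,\dots,\tau_n)\prod_{i=1}^n x_i(t-\tau_i)$, and $H*x^n$ denotes $H*[x,\dots,x]$ ($n$ copies). For a function $A$ on $\mathbb{Z}^d$, $\|A\|_p=(\sum_\tau|A(\tau)|^p)^{1/p}$. In the $k=0$ terms, $(en/k)^k$ and $\|x\|_{2k}^k$ are interpreted as $1$. *)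

theory Defs
  imports "HOL-Analysis.Analysis"
begin

text \<open>Points of Z^n are integer lists of length n; kernels are functions on int lists,
  considered on the lists of length n. Signals are functions int => real.\<close>

definition lattice :: "nat \<Rightarrow> int list set" where
  "lattice n = {\<tau>. length \<tau> = n}"

definition volt_conv :: "nat \<Rightarrow> (int list \<Rightarrow> real) \<Rightarrow> (int \<Rightarrow> real) \<Rightarrow> int \<Rightarrow> real" where
  "volt_conv n H x t = (\<Sum>\<^sub>\<infinity>\<tau>\<in>lattice n. H \<tau> * (\<Prod>i<n. x (t - \<tau> ! i)))"

definition sig_norm :: "real \<Rightarrow> (int \<Rightarrow> real) \<Rightarrow> real" where
  "sig_norm p x = (\<Sum>\<^sub>\<infinity>t\<in>UNIV. \<bar>x t\<bar> powr p) powr (1 / p)"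

definition ker_norm :: "nat \<Rightarrow> real \<Rightarrow> (int list \<Rightarrow> real) \<Rightarrow> real" where
  "ker_norm n p H = (\<Sum>\<^sub>\<infinity>\<tau>\<in>lattice n. \<bar>H \<tau>\<bar> powr p) powr (1 / p)"

end

theory Submission
  imports Defs
begin

(* Expanding (x + y)^n slot by slot writes H*(x+y)^n - H*x^n as the sum, over the nonempty sets S
   of slots that receive y, of a multilinear convolution T_S with x in the remaining n - |S| slots;
   exactly (n choose k) sets leave k slots to x, and (n choose k) <= (en/k)^k.
   Each T_S is bounded in l^2 in two ways. Schur's test, i.e. Cauchy-Schwarz with the weights
   |prod_i z_i(t - tau_i)|, whose sums over the lags tau and over the times t are both at most
   ||x||_1^k ||y||_1^(n-k), gives the bound with ||H||_2. Minkowski's inequality over the lags gives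
   ||H||_1 times the l^2 norm of a product of shifted signals, and the AM-GM inequality bounds the
   l^2 norm of a product of m shifts of a signal f by ||f||_(2m)^m. *)

lemma lp_infsum_eq_sum:
  fixes f :: "'a \<Rightarrow> real"
  assumes "finite A" "A \<subseteq> B" "\<And>t. t \<in> B - A \<Longrightarrow> f t = 0"
  shows "(\<Sum>\<^sub>\<infinity>t\<in>B. \<bar>f t\<bar> powr p) powr (1 / p) = (\<Sum>t\<in>A. \<bar>f t\<bar> powr p) powr (1 / p)"
proof -
  have "(\<Sum>\<^sub>\<infinity>t\<in>B. \<bar>f t\<bar> powr p) = (\<Sum>\<^sub>\<infinity>t\<in>A. \<bar>f t\<bar> powr p)"
    by (rule infsum_cong_neutral) (use assms in auto)
  then show ?thesis
    using assms(1) by simp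
qed

lemma lp_sum_2_eq_L2_set: "(\<Sum>t\<in>A. \<bar>f t\<bar> powr 2) powr (1 / 2) = L2_set f A"
  unfolding L2_set_def by (simp add: powr_numeral powr_half_sqrt sum_nonneg)

lemma sig_norm_eq_sum:
  assumes "finite A" "\<And>t. t \<notin> A \<Longrightarrow> f t = 0"
  shows "sig_norm p f = (\<Sum>t\<in>A. \<bar>f t\<bar> powr p) powr (1 / p)"
  unfolding sig_norm_def using assms by (intro lp_infsum_eq_sum) auto

lemma ker_norm_eq_sum:
  assumes "finite A" "A \<subseteq> lattice n" "\<And>\<tau>. \<tau> \<in> lattice n - A \<Longrightarrow> H \<tau> = 0"
  shows "ker_norm n p H = (\<Sum>\<tau>\<in>A. \<bar>H \<tau>\<bar> powr p) powr (1 / p)"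
  unfolding ker_norm_def using assms by (rule lp_infsum_eq_sum)

lemma sig_norm_nonneg: "0 \<le> sig_norm p f"
  by (simp add: sig_norm_def)

lemma ker_norm_nonneg: "0 \<le> ker_norm n p H"
  by (simp add: ker_norm_def)

lemma sig_norm_1_eq_sum:
  assumes "finite A" "\<And>t. t \<notin> A \<Longrightarrow> f t = 0"
  shows "sig_norm 1 f = (\<Sum>t\<in>A. \<bar>f t\<bar>)"
  using sig_norm_eq_sum[of A f 1] assms by (simp add: sum_nonneg)

lemma sig_norm_2_eq_L2_set:
  assumes "finite A" "\<And>t. t \<notin> A \<Longrightarrow> f t = 0"
  shows "sig_norm 2 f = L2_set f A"
proof -
  have "sig_norm 2 f = (\<Sum>t\<in>A. \<bar>f t\<bar> powr 2) powr (1 / 2)"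
    using assms by (rule sig_norm_eq_sum)
  then show ?thesis
    by (simp only: lp_sum_2_eq_L2_set)
qed

lemma sig_norm_even_power:
  assumes "finite A" "\<And>t. t \<notin> A \<Longrightarrow> f t = 0" "0 < m"
  shows "sig_norm (2 * real m) f ^ (2 * m) = (\<Sum>t\<in>A. \<bar>f t\<bar> ^ (2 * m))"
proof -
  have "(\<Sum>t\<in>A. \<bar>f t\<bar> powr real (2 * m)) = (\<Sum>t\<in>A. \<bar>f t\<bar> ^ (2 * m))"
    using assms(3) by (intro sum.cong refl powr_realpow') auto
  then have "sig_norm (2 * real m) f = (\<Sum>t\<in>A. \<bar>f t\<bar> ^ (2 * m)) powr (1 / real (2 * m))"
    using sig_norm_eq_sum[OF assms(1,2)] by simp
  moreover have "(s powr (1 / real (2 * m))) ^ (2 * m) = s" if "0 \<le> s" for s :: real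
    using assms(3) that by (cases "s = 0") (simp_all add: powr_power)
  ultimately show ?thesis
    by (simp add: sum_nonneg)
qed

lemma ker_norm_1_eq_sum:
  assumes "finite A" "A \<subseteq> lattice n" "\<And>\<tau>. \<tau> \<in> lattice n - A \<Longrightarrow> H \<tau> = 0"
  shows "ker_norm n 1 H = (\<Sum>\<tau>\<in>A. \<bar>H \<tau>\<bar>)"
  using ker_norm_eq_sum[of A n H 1] assms by (simp add: sum_nonneg)

lemma ker_norm_2_eq_L2_set:
  assumes "finite A" "A \<subseteq> lattice n" "\<And>\<tau>. \<tau> \<in> lattice n - A \<Longrightarrow> H \<tau> = 0"
  shows "ker_norm n 2 H = L2_set H A"
proof -
  have "ker_norm n 2 H = (\<Sum>\<tau>\<in>A. \<bar>H \<tau>\<bar> powr 2) powr (1 / 2)"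
    using assms by (rule ker_norm_eq_sum)
  then show ?thesis
    by (simp only: lp_sum_2_eq_L2_set)
qed

lemma L2_set_sum_le: "L2_set (\<lambda>t. \<Sum>i\<in>I. f i t) A \<le> (\<Sum>i\<in>I. L2_set (f i) A)"
proof (induction I rule: infinite_finite_induct)
  case (insert j I)
  have "L2_set (\<lambda>t. f j t + (\<Sum>i\<in>I. f i t)) A \<le> L2_set (f j) A + L2_set (\<lambda>t. \<Sum>i\<in>I. f i t) A"
    by (rule L2_set_triangle_ineq)
  with insert show ?case
    by simp
qed (simp_all add: L2_set_def)

lemma L2_set_scale: "L2_set (\<lambda>t. c * f t) A = \<bar>c\<bar> * L2_set f A"
  by (simp add: L2_set_def power_mult_distrib real_sqrt_mult flip: sum_distrib_left)

lemma L2_set_mult_le: "L2_set (\<lambda>t. f t * g t) A \<le> L2_set f A * L2_set g A"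
proof -
  have "(\<Sum>t\<in>A. (f t)\<^sup>2 * (g t)\<^sup>2) \<le> (\<Sum>t\<in>A. (f t)\<^sup>2 * (\<Sum>s\<in>A. (g s)\<^sup>2))"
  proof (cases "finite A")
    case True
    then show ?thesis
      by (intro sum_mono mult_left_mono member_le_sum) auto
  qed simp
  then show ?thesis
    unfolding L2_set_def power_mult_distrib
    by (simp add: real_sqrt_le_mono flip: real_sqrt_mult sum_distrib_right)
qed

lemma L2_set_Schur_test:
  fixes H :: "'b \<Rightarrow> real" and Q :: "'b \<Rightarrow> 'a \<Rightarrow> real"
  assumes "finite A" "0 \<le> M"
    and row: "\<And>t. t \<in> T \<Longrightarrow> (\<Sum>\<tau>\<in>A. \<bar>Q \<tau> t\<bar>) \<le> M"
    and col: "\<And>\<tau>. \<tau> \<in> A \<Longrightarrow> (\<Sum>t\<in>T. \<bar>Q \<tau> t\<bar>) \<le> M"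
  shows "L2_set (\<lambda>t. \<Sum>\<tau>\<in>A. H \<tau> * Q \<tau> t) T \<le> M * L2_set H A"
proof -
  have pointwise: "(\<Sum>\<tau>\<in>A. H \<tau> * Q \<tau> t)\<^sup>2 \<le> (\<Sum>\<tau>\<in>A. (H \<tau>)\<^sup>2 * \<bar>Q \<tau> t\<bar>) * M"
    if "t \<in> T" for t
  proof -
    have "\<bar>\<Sum>\<tau>\<in>A. H \<tau> * Q \<tau> t\<bar> \<le> (\<Sum>\<tau>\<in>A. (\<bar>H \<tau>\<bar> * sqrt \<bar>Q \<tau> t\<bar>) * sqrt \<bar>Q \<tau> t\<bar>)"
      by (rule order_trans[OF sum_abs]) (simp add: abs_mult mult.assoc)
    then have "(\<Sum>\<tau>\<in>A. H \<tau> * Q \<tau> t)\<^sup>2 \<le> (\<Sum>\<tau>\<in>A. (\<bar>H \<tau>\<bar> * sqrt \<bar>Q \<tau> t\<bar>) * sqrt \<bar>Q \<tau> t\<bar>)\<^sup>2"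
      by (metis abs_ge_zero power2_abs power_mono)
    also have "\<dots> \<le> (\<Sum>\<tau>\<in>A. (\<bar>H \<tau>\<bar> * sqrt \<bar>Q \<tau> t\<bar>)\<^sup>2) * (\<Sum>\<tau>\<in>A. (sqrt \<bar>Q \<tau> t\<bar>)\<^sup>2)"
      by (rule Cauchy_Schwarz_ineq_sum)
    also have "\<dots> = (\<Sum>\<tau>\<in>A. (H \<tau>)\<^sup>2 * \<bar>Q \<tau> t\<bar>) * (\<Sum>\<tau>\<in>A. \<bar>Q \<tau> t\<bar>)"
      by (simp add: power_mult_distrib)
    also have "\<dots> \<le> (\<Sum>\<tau>\<in>A. (H \<tau>)\<^sup>2 * \<bar>Q \<tau> t\<bar>) * M"
      by (intro mult_left_mono row that sum_nonneg) simp
    finally show ?thesis .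
  qed
  have "(\<Sum>t\<in>T. (\<Sum>\<tau>\<in>A. H \<tau> * Q \<tau> t)\<^sup>2) \<le> (\<Sum>t\<in>T. (\<Sum>\<tau>\<in>A. (H \<tau>)\<^sup>2 * \<bar>Q \<tau> t\<bar>) * M)"
    by (rule sum_mono) (rule pointwise)
  also have "\<dots> = M * (\<Sum>\<tau>\<in>A. (H \<tau>)\<^sup>2 * (\<Sum>t\<in>T. \<bar>Q \<tau> t\<bar>))"
    by (simp add: sum_distrib_left sum_distrib_right sum.swap[of _ T] mult_ac)
  also have "\<dots> \<le> M * (\<Sum>\<tau>\<in>A. (H \<tau>)\<^sup>2 * M)"
    by (intro mult_left_mono sum_mono col \<open>0 \<le> M\<close>) simp_all
  also have "\<dots> = (M * L2_set H A)\<^sup>2"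
    by (simp add: L2_set_def power_mult_distrib sum_nonneg sum_distrib_left power2_eq_square mult_ac)
  finally have "L2_set (\<lambda>t. \<Sum>\<tau>\<in>A. H \<tau> * Q \<tau> t) T \<le> sqrt ((M * L2_set H A)\<^sup>2)"
    unfolding L2_set_def by (rule real_sqrt_le_mono)
  then show ?thesis
    using \<open>0 \<le> M\<close> by simp
qed

lemma sum_shift_le:
  fixes g :: "'a::ab_group_add \<Rightarrow> real"
  assumes "finite T" "finite Z" "\<And>s. s \<notin> Z \<Longrightarrow> g s = 0" "\<And>s. 0 \<le> g s"
  shows "(\<Sum>t\<in>T. g (t - a)) \<le> (\<Sum>s\<in>Z. g s)"
proof -
  have "(\<Sum>t\<in>T. g (t - a)) = (\<Sum>s\<in>(\<lambda>t. t - a) ` T. g s)"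
    by (subst sum.reindex) (auto simp: inj_on_def)
  also have "\<dots> \<le> (\<Sum>s\<in>(\<lambda>t. t - a) ` T \<union> Z. g s)"
    by (rule sum_mono2) (use assms in auto)
  also have "\<dots> = (\<Sum>s\<in>Z. g s)"
    by (rule sum.mono_neutral_right) (use assms in auto)
  finally show ?thesis .
qed

lemma prod_square_le_mean_power:
  fixes w :: "'a \<Rightarrow> real"
  assumes "finite I" "I \<noteq> {}"
  shows "(\<Prod>i\<in>I. (w i)\<^sup>2) \<le> (\<Sum>i\<in>I. \<bar>w i\<bar> ^ (2 * card I) / card I)"
proof -
  have m: "0 < card I"
    using assms by (simp add: card_gt_0_iff)
  have root: "(\<bar>w i\<bar> ^ (2 * card I)) powr (1 / card I) = (w i)\<^sup>2" for i
  proof -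
    have "\<bar>w i\<bar> ^ (2 * card I) = ((w i)\<^sup>2) powr (card I)"
      using m by (simp add: power_mult powr_realpow')
    then show ?thesis
      using m by (simp add: powr_powr)
  qed
  have "(\<Prod>i\<in>I. (w i)\<^sup>2) = (\<Prod>i\<in>I. \<bar>w i\<bar> ^ (2 * card I)) powr (1 / card I)"
    by (simp add: prod_powr_distrib root)
  also have "\<dots> \<le> (\<Sum>i\<in>I. \<bar>w i\<bar> ^ (2 * card I) / card I)"
    using assms by (intro arith_geom_mean) auto
  finally show ?thesis .
qed

lemma L2_set_prod_shift_le:
  fixes f :: "int \<Rightarrow> real"
  assumes "finite I" "I \<noteq> {}" "finite T" "finite Z" "\<And>s. s \<notin> Z \<Longrightarrow> f s = 0"
  shows "L2_set (\<lambda>t. \<Prod>i\<in>I. f (t - a i)) T \<le> sig_norm (2 * real (card I)) f ^ card I"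
proof -
  define m where "m = card I"
  have m: "0 < m"
    using assms by (simp add: m_def card_gt_0_iff)
  have "(\<Sum>t\<in>T. (\<Prod>i\<in>I. f (t - a i))\<^sup>2) \<le> (\<Sum>t\<in>T. \<Sum>i\<in>I. \<bar>f (t - a i)\<bar> ^ (2 * m) / m)"
    unfolding m_def power2_eq_square prod.distrib[symmetric]
    by (intro sum_mono prod_square_le_mean_power[unfolded power2_eq_square] assms)
  also have "\<dots> = (\<Sum>i\<in>I. (\<Sum>t\<in>T. \<bar>f (t - a i)\<bar> ^ (2 * m)) / m)"
    by (subst sum.swap) (simp add: sum_divide_distrib)
  also have "\<dots> \<le> (\<Sum>i\<in>I. (\<Sum>s\<in>Z. \<bar>f s\<bar> ^ (2 * m)) / m)"
    by (intro sum_mono divide_right_mono sum_shift_le) (use assms m in auto)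
  also have "\<dots> = sig_norm (2 * real m) f ^ (2 * m)"
    using m by (simp add: m_def sig_norm_even_power[OF assms(4,5)])
  also have "\<dots> = (sig_norm (2 * real m) f ^ m)\<^sup>2"
    by (metis power_mult mult.commute)
  finally have "L2_set (\<lambda>t. \<Prod>i\<in>I. f (t - a i)) T \<le> sqrt ((sig_norm (2 * real m) f ^ m)\<^sup>2)"
    unfolding L2_set_def by (rule real_sqrt_le_mono)
  then show ?thesis
    by (simp add: m_def sig_norm_nonneg)
qed

definition multiconv :: "nat \<Rightarrow> int list set \<Rightarrow> (int list \<Rightarrow> real) \<Rightarrow> (nat \<Rightarrow> int \<Rightarrow> real) \<Rightarrow> int \<Rightarrow> real"
  where "multiconv n A H z t = (\<Sum>\<tau>\<in>A. H \<tau> * (\<Prod>i<n. z i (t - \<tau> ! i)))"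

lemma volt_conv_eq_multiconv:
  assumes "finite {\<tau>\<in>lattice n. H \<tau> \<noteq> 0}"
  shows "volt_conv n H x t = multiconv n {\<tau>\<in>lattice n. H \<tau> \<noteq> 0} H (\<lambda>_. x) t"
proof -
  have "volt_conv n H x t = (\<Sum>\<^sub>\<infinity>\<tau>\<in>{\<tau>\<in>lattice n. H \<tau> \<noteq> 0}. H \<tau> * (\<Prod>i<n. x (t - \<tau> ! i)))"
    unfolding volt_conv_def by (rule infsum_cong_neutral) auto
  then show ?thesis
    using assms by (simp add: multiconv_def)
qed

lemma multiconv_add_sub_expansion:
  "multiconv n A H (\<lambda>_ s. x s + y s) t - multiconv n A H (\<lambda>_. x) t
    = (\<Sum>S\<in>Pow {..<n} - {{}}. multiconv n A H (\<lambda>i. if i \<in> S then y else x) t)"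
proof -
  have binomial: "(\<Prod>i<n. x (t - \<tau> ! i) + y (t - \<tau> ! i)) - (\<Prod>i<n. x (t - \<tau> ! i))
      = (\<Sum>S\<in>Pow {..<n} - {{}}. \<Prod>i<n. (if i \<in> S then y else x) (t - \<tau> ! i))" for \<tau>
  proof -
    have split: "(\<Prod>i<n. (if i \<in> S then y else x) (t - \<tau> ! i))
        = (\<Prod>i\<in>S. y (t - \<tau> ! i)) * (\<Prod>i\<in>{..<n} - S. x (t - \<tau> ! i))" if "S \<subseteq> {..<n}" for S
      using that by (simp add: if_distribR prod.If_cases Int_absorb1 Diff_eq)
    have "(\<Prod>i<n. y (t - \<tau> ! i) + x (t - \<tau> ! i))
        = (\<Sum>S\<in>Pow {..<n}. (\<Prod>i\<in>S. y (t - \<tau> ! i)) * (\<Prod>i\<in>{..<n} - S. x (t - \<tau> ! i)))"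
      by (rule prod_add) simp
    also have "\<dots> = (\<Prod>i<n. x (t - \<tau> ! i))
        + (\<Sum>S\<in>Pow {..<n} - {{}}. \<Prod>i<n. (if i \<in> S then y else x) (t - \<tau> ! i))"
      by (subst sum.remove[of _ "{}"]) (simp_all add: split)
    finally show ?thesis
      by (simp add: add.commute)
  qed
  have "multiconv n A H (\<lambda>_ s. x s + y s) t - multiconv n A H (\<lambda>_. x) t
      = (\<Sum>\<tau>\<in>A. H \<tau> * ((\<Prod>i<n. x (t - \<tau> ! i) + y (t - \<tau> ! i)) - (\<Prod>i<n. x (t - \<tau> ! i))))"
    by (simp add: multiconv_def sum_subtractf right_diff_distrib)
  also have "\<dots> = (\<Sum>\<tau>\<in>A. \<Sum>S\<in>Pow {..<n} - {{}}. H \<tau> * (\<Prod>i<n. (if i \<in> S then y else x) (t - \<tau> ! i)))"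
    by (simp add: binomial sum_distrib_left)
  finally show ?thesis
    unfolding multiconv_def by (simp only: sum.swap[of _ A])
qed

lemma multiconv_eq_0_outside:
  assumes "0 < n" "\<And>s. s \<notin> Z \<Longrightarrow> z 0 s = 0" "t \<notin> (\<lambda>(\<tau>, s). s + \<tau> ! 0) ` (A \<times> Z)"
  shows "multiconv n A H z t = 0"
  unfolding multiconv_def
proof (intro sum.neutral ballI)
  fix \<tau> assume "\<tau> \<in> A"
  then have "t - \<tau> ! 0 \<notin> Z"
    using assms(3) by (auto intro: rev_image_eqI[of "(\<tau>, t - \<tau> ! 0)"])
  then show "H \<tau> * (\<Prod>i<n. z i (t - \<tau> ! i)) = 0"
    using assms(1,2) by (auto intro!: prod_zero bexI[of _ 0])
qed

lemma sum_lags_abs_prod_shift_le: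
  fixes z :: "nat \<Rightarrow> int \<Rightarrow> real"
  assumes "finite A" "A \<subseteq> lattice n" "finite Z" "\<And>i s. s \<notin> Z \<Longrightarrow> z i s = 0"
  shows "(\<Sum>\<tau>\<in>A. \<bar>\<Prod>i<n. z i (t - \<tau> ! i)\<bar>) \<le> (\<Prod>i<n. \<Sum>s\<in>Z. \<bar>z i s\<bar>)"
proof -
  \<comment> \<open>on \<open>lattice n\<close> the lags are determined by the points \<open>t - \<tau> ! i\<close> they sample\<close>
  define \<phi> where "\<phi> \<tau> = restrict (\<lambda>i. t - \<tau> ! i) {..<n}" for \<tau> :: "int list"
  define g where "g h = (\<Prod>i<n. \<bar>z i (h i)\<bar>)" for h
  have "inj_on \<phi> A"
  proof (rule inj_onI)
    fix \<sigma> \<tau> assume "\<sigma> \<in> A" "\<tau> \<in> A" and eq: "\<phi> \<sigma> = \<phi> \<tau>"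
    have "\<sigma> ! i = \<tau> ! i" if "i < n" for i
      using fun_cong[OF eq, of i] that by (simp add: \<phi>_def)
    moreover have "length \<sigma> = n" "length \<tau> = n"
      using \<open>\<sigma> \<in> A\<close> \<open>\<tau> \<in> A\<close> assms(2) by (auto simp: lattice_def)
    ultimately show "\<sigma> = \<tau>"
      by (simp add: nth_equalityI)
  qed
  have "(\<Sum>\<tau>\<in>A. \<bar>\<Prod>i<n. z i (t - \<tau> ! i)\<bar>) = (\<Sum>\<tau>\<in>A. g (\<phi> \<tau>))"
    by (auto simp: g_def \<phi>_def abs_prod intro!: sum.cong prod.cong)
  also have "\<dots> = (\<Sum>h\<in>\<phi> ` A. g h)"
    using \<open>inj_on \<phi> A\<close> by (simp add: sum.reindex)
  also have "\<dots> \<le> (\<Sum>h\<in>\<phi> ` A \<union> PiE {..<n} (\<lambda>_. Z). g h)"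
    using assms(1,3) by (intro sum_mono2) (auto simp: g_def finite_PiE prod_nonneg)
  also have "\<dots> = (\<Sum>h\<in>PiE {..<n} (\<lambda>_. Z). g h)"
  proof (rule sum.mono_neutral_right)
    show "\<forall>h\<in>\<phi> ` A \<union> PiE {..<n} (\<lambda>_. Z) - PiE {..<n} (\<lambda>_. Z). g h = 0"
      using assms(4) by (auto simp: g_def \<phi>_def PiE_iff intro!: prod_zero)
  qed (use assms(1,3) in \<open>auto simp: finite_PiE\<close>)
  also have "\<dots> = (\<Prod>i<n. \<Sum>s\<in>Z. \<bar>z i s\<bar>)"
    unfolding g_def using assms(3) by (simp add: prod_sum_PiE)
  finally show ?thesis .
qed

lemma sum_times_abs_prod_shift_le:
  fixes z :: "nat \<Rightarrow> int \<Rightarrow> real"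
  assumes "0 < n" "finite T" "finite Z" "\<And>i s. s \<notin> Z \<Longrightarrow> z i s = 0"
  shows "(\<Sum>t\<in>T. \<bar>\<Prod>i<n. z i (t - \<tau> ! i)\<bar>) \<le> (\<Prod>i<n. \<Sum>s\<in>Z. \<bar>z i s\<bar>)"
proof -
  \<comment> \<open>only slot 0 is summed over \<open>t\<close>; every other slot is bounded by its \<open>l\<^sup>1\<close> norm\<close>
  define R where "R = (\<Prod>i\<in>{..<n} - {0}. \<Sum>s\<in>Z. \<bar>z i s\<bar>)"
  have R: "0 \<le> R"
    by (simp add: R_def prod_nonneg sum_nonneg)
  have entry_le: "\<bar>z i s\<bar> \<le> (\<Sum>s\<in>Z. \<bar>z i s\<bar>)" for i s
    using assms(3,4) by (cases "s \<in> Z") (auto intro: member_le_sum simp: sum_nonneg)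
  have "\<bar>\<Prod>i<n. z i (t - \<tau> ! i)\<bar> \<le> \<bar>z 0 (t - \<tau> ! 0)\<bar> * R" for t
  proof -
    have "\<bar>\<Prod>i<n. z i (t - \<tau> ! i)\<bar> = \<bar>z 0 (t - \<tau> ! 0)\<bar> * (\<Prod>i\<in>{..<n} - {0}. \<bar>z i (t - \<tau> ! i)\<bar>)"
      using assms(1) by (simp add: abs_mult abs_prod prod.remove[of _ 0])
    also have "\<dots> \<le> \<bar>z 0 (t - \<tau> ! 0)\<bar> * R"
      unfolding R_def by (intro mult_left_mono prod_mono conjI entry_le) simp_all
    finally show ?thesis .
  qed
  then have "(\<Sum>t\<in>T. \<bar>\<Prod>i<n. z i (t - \<tau> ! i)\<bar>) \<le> (\<Sum>t\<in>T. \<bar>z 0 (t - \<tau> ! 0)\<bar>) * R"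
    by (simp add: sum_mono sum_distrib_right)
  also have "\<dots> \<le> (\<Sum>s\<in>Z. \<bar>z 0 s\<bar>) * R"
    using assms by (intro mult_right_mono R sum_shift_le[where g = "\<lambda>s. \<bar>z 0 s\<bar>"]) auto
  also have "\<dots> = (\<Prod>i<n. \<Sum>s\<in>Z. \<bar>z i s\<bar>)"
    using assms(1) by (simp add: R_def prod.remove[of _ 0])
  finally show ?thesis .
qed

lemma L2_set_multiconv_le_kernel_L2:
  fixes z :: "nat \<Rightarrow> int \<Rightarrow> real"
  assumes "0 < n" "finite A" "A \<subseteq> lattice n" "finite T" "finite Z" "\<And>i s. s \<notin> Z \<Longrightarrow> z i s = 0"
  shows "L2_set (multiconv n A H z) T \<le> L2_set H A * (\<Prod>i<n. \<Sum>s\<in>Z. \<bar>z i s\<bar>)"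
proof -
  have "L2_set (multiconv n A H z) T \<le> (\<Prod>i<n. \<Sum>s\<in>Z. \<bar>z i s\<bar>) * L2_set H A"
    unfolding multiconv_def
    using assms by (intro L2_set_Schur_test sum_lags_abs_prod_shift_le sum_times_abs_prod_shift_le)
      (auto intro: prod_nonneg sum_nonneg)
  then show ?thesis
    by (simp add: mult.commute)
qed

lemma L2_set_multiconv_le_kernel_l1:
  assumes "\<And>\<tau>. \<tau> \<in> A \<Longrightarrow> L2_set (\<lambda>t. \<Prod>i<n. z i (t - \<tau> ! i)) T \<le> B"
  shows "L2_set (multiconv n A H z) T \<le> (\<Sum>\<tau>\<in>A. \<bar>H \<tau>\<bar>) * B"
proof -
  have "L2_set (multiconv n A H z) T \<le> (\<Sum>\<tau>\<in>A. L2_set (\<lambda>t. H \<tau> * (\<Prod>i<n. z i (t - \<tau> ! i))) T)"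
    unfolding multiconv_def by (rule L2_set_sum_le)
  also have "\<dots> \<le> (\<Sum>\<tau>\<in>A. \<bar>H \<tau>\<bar> * B)"
    unfolding L2_set_scale by (intro sum_mono mult_left_mono assms) simp_all
  finally show ?thesis
    by (simp add: sum_distrib_right)
qed

lemma prod_select_eq_power:
  assumes "S \<subseteq> {..<n}"
  shows "(\<Prod>i<n. f (if i \<in> S then y else x)) = f x ^ (n - card S) * f y ^ card S"
proof -
  have "(\<Prod>i<n. f (if i \<in> S then y else x)) = (\<Prod>i\<in>{..<n} \<inter> S. f y) * (\<Prod>i\<in>{..<n} - S. f x)"
    by (simp add: if_distrib prod.If_cases Diff_eq)
  then show ?thesis
    using assms by (simp add: Int_absorb1 card_Diff_subset finite_subset mult.commute)
qed

lemma L2_set_prod_shift_select_le: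
  fixes x y :: "int \<Rightarrow> real"
  assumes "S \<subseteq> {..<n}" "S \<noteq> {}" "finite T" "finite Z"
    and "\<And>s. s \<notin> Z \<Longrightarrow> x s = 0" "\<And>s. s \<notin> Z \<Longrightarrow> y s = 0"
  shows "L2_set (\<lambda>t. \<Prod>i<n. (if i \<in> S then y else x) (t - \<tau> ! i)) T
    \<le> sig_norm (2 * real (n - card S)) x ^ (n - card S) * sig_norm (2 * real (card S)) y ^ card S"
proof -
  define Px where "Px = (\<lambda>t. \<Prod>i\<in>{..<n} - S. x (t - \<tau> ! i))"
  define Py where "Py = (\<lambda>t. \<Prod>i\<in>S. y (t - \<tau> ! i))"
  have finite_S: "finite S"
    using assms(1) finite_subset by blast
  have prod_eq: "(\<Prod>i<n. (if i \<in> S then y else x) (t - \<tau> ! i)) = Px t * Py t" for t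
    using assms(1) by (simp add: Px_def Py_def if_distribR prod.If_cases Int_absorb1 Diff_eq mult.commute)
  have Py_le: "L2_set Py T \<le> sig_norm (2 * real (card S)) y ^ card S"
    unfolding Py_def using assms finite_S by (intro L2_set_prod_shift_le[where Z = Z])
  show ?thesis
  proof (cases "S = {..<n}")
    case True
    \<comment> \<open>here \<open>Px = 1\<close>, and \<open>L2_set_mult_le\<close> would lose a factor \<open>sqrt (card T)\<close>\<close>
    then show ?thesis
      using Py_le by (simp add: prod_eq Px_def Py_def)
  next
    case False
    have "card ({..<n} - S) = n - card S"
      using assms(1) finite_S by (simp add: card_Diff_subset)
    moreover have "L2_set Px T \<le> sig_norm (2 * real (card ({..<n} - S))) x ^ card ({..<n} - S)"
      unfolding Px_def using assms(1,3-5) False by (intro L2_set_prod_shift_le[where Z = Z]) auto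
    ultimately have Px_le: "L2_set Px T \<le> sig_norm (2 * real (n - card S)) x ^ (n - card S)"
      by simp
    have "L2_set (\<lambda>t. \<Prod>i<n. (if i \<in> S then y else x) (t - \<tau> ! i)) T \<le> L2_set Px T * L2_set Py T"
      unfolding prod_eq by (rule L2_set_mult_le)
    also have "\<dots> \<le> sig_norm (2 * real (n - card S)) x ^ (n - card S) * sig_norm (2 * real (card S)) y ^ card S"
      by (intro mult_mono Px_le Py_le) (simp_all add: sig_norm_nonneg)
    finally show ?thesis .
  qed
qed

lemma L2_set_multiconv_select_le_ker_norm_2:
  assumes "0 < n" "finite {\<tau>\<in>lattice n. H \<tau> \<noteq> 0}" "finite {t. x t \<noteq> 0}" "finite {t. y t \<noteq> 0}"
    and "finite T" "S \<subseteq> {..<n}"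
  shows "L2_set (multiconv n {\<tau>\<in>lattice n. H \<tau> \<noteq> 0} H (\<lambda>i. if i \<in> S then y else x)) T
    \<le> ker_norm n 2 H * (sig_norm 1 x ^ (n - card S) * sig_norm 1 y ^ card S)"
proof -
  define A where "A = {\<tau>\<in>lattice n. H \<tau> \<noteq> 0}"
  define Z where "Z = {t. x t \<noteq> 0} \<union> {t. y t \<noteq> 0}"
  have "finite Z"
    using assms(3,4) by (simp add: Z_def)
  then have l1_norms: "sig_norm 1 x = (\<Sum>s\<in>Z. \<bar>x s\<bar>)" "sig_norm 1 y = (\<Sum>s\<in>Z. \<bar>y s\<bar>)"
    by (auto intro!: sig_norm_1_eq_sum simp: Z_def)
  have "ker_norm n 2 H = L2_set H A"
    using assms(2) by (intro ker_norm_2_eq_L2_set) (auto simp: A_def)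
  have "L2_set (multiconv n A H (\<lambda>i. if i \<in> S then y else x)) T
      \<le> L2_set H A * (\<Prod>i<n. \<Sum>s\<in>Z. \<bar>(if i \<in> S then y else x) s\<bar>)"
    using assms \<open>finite Z\<close> by (intro L2_set_multiconv_le_kernel_L2) (auto simp: A_def Z_def)
  also have "\<dots> = ker_norm n 2 H * (sig_norm 1 x ^ (n - card S) * sig_norm 1 y ^ card S)"
    using assms(2) prod_select_eq_power[OF assms(6), of "\<lambda>u. \<Sum>s\<in>Z. \<bar>u s\<bar>" y x]
    by (simp add: \<open>ker_norm n 2 H = L2_set H A\<close> l1_norms)
  finally show ?thesis
    by (simp add: A_def)
qed

lemma L2_set_multiconv_select_le_ker_norm_1:
  assumes "finite {\<tau>\<in>lattice n. H \<tau> \<noteq> 0}" "finite {t. x t \<noteq> 0}" "finite {t. y t \<noteq> 0}"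
    and "finite T" "S \<subseteq> {..<n}" "S \<noteq> {}"
  shows "L2_set (multiconv n {\<tau>\<in>lattice n. H \<tau> \<noteq> 0} H (\<lambda>i. if i \<in> S then y else x)) T
    \<le> ker_norm n 1 H
      * (sig_norm (2 * real (n - card S)) x ^ (n - card S) * sig_norm (2 * real (card S)) y ^ card S)"
proof -
  have "finite ({t. x t \<noteq> 0} \<union> {t. y t \<noteq> 0})"
    using assms(2,3) by simp
  then have "L2_set (multiconv n {\<tau>\<in>lattice n. H \<tau> \<noteq> 0} H (\<lambda>i. if i \<in> S then y else x)) T
      \<le> (\<Sum>\<tau>\<in>{\<tau>\<in>lattice n. H \<tau> \<noteq> 0}. \<bar>H \<tau>\<bar>)
        * (sig_norm (2 * real (n - card S)) x ^ (n - card S) * sig_norm (2 * real (card S)) y ^ card S)"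
    using assms
    by (intro L2_set_multiconv_le_kernel_l1
        L2_set_prod_shift_select_le[where Z = "{t. x t \<noteq> 0} \<union> {t. y t \<noteq> 0}"]) auto
  also have "(\<Sum>\<tau>\<in>{\<tau>\<in>lattice n. H \<tau> \<noteq> 0}. \<bar>H \<tau>\<bar>) = ker_norm n 1 H"
    using assms(1) by (intro ker_norm_1_eq_sum[symmetric]) auto
  finally show ?thesis .
qed

lemma pow_div_fact_le_exp:
  fixes x :: real
  assumes "0 \<le> x"
  shows "x ^ k / fact k \<le> exp x"
proof -
  have "(\<Sum>j\<in>{k}. x ^ j /\<^sub>R fact j) \<le> (\<Sum>j. x ^ j /\<^sub>R fact j)"
    using assms exp_converges[of x] by (intro sum_le_suminf) (auto simp: sums_iff)
  then show ?thesis
    using exp_converges[of x] by (simp add: sums_iff divide_inverse mult.commute)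
qed

lemma binomial_le_exp_pow: "real (n choose k) \<le> (exp 1 * real n / real k) ^ k"
proof (cases "k = 0")
  case False
  have "real (n choose k) * fact k \<le> real n ^ k"
    by (metis binomial_fact_pow of_nat_fact of_nat_le_iff of_nat_mult of_nat_power)
  then have "real (n choose k) \<le> real n ^ k / real k ^ k * (real k ^ k / fact k)"
    using False by (simp add: field_simps)
  also have "\<dots> \<le> real n ^ k / real k ^ k * exp (real k)"
    by (intro mult_left_mono pow_div_fact_le_exp) auto
  also have "\<dots> = (exp 1 * real n / real k) ^ k"
    by (simp add: power_divide power_mult_distrib flip: exp_of_nat_mult)
  finally show ?thesis .
qed simp

lemma sum_nonempty_subsets_by_card:
  fixes c :: "nat \<Rightarrow> 'a::comm_semiring_1"
  shows "(\<Sum>S\<in>Pow {..<n} - {{}}. c (n - card S)) = (\<Sum>k<n. of_nat (n choose k) * c k)"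
proof -
  let ?P = "Pow {..<n} - {{}}"
  have card_range: "card ` ?P \<subseteq> {1..n}"
  proof
    fix j assume "j \<in> card ` ?P"
    then obtain S where "S \<subseteq> {..<n}" "S \<noteq> {}" "j = card S" by auto
    moreover then have "finite S" by (meson finite_lessThan finite_subset)
    ultimately show "j \<in> {1..n}"
      using card_mono[of "{..<n}" S] by (auto simp: Suc_le_eq card_gt_0_iff)
  qed
  have "(\<Sum>S\<in>?P. c (n - card S)) = (\<Sum>j=1..n. \<Sum>S | S \<in> ?P \<and> card S = j. c (n - card S))"
    by (rule sum.group[OF _ _ card_range, symmetric]) simp_all
  also have "\<dots> = (\<Sum>j=1..n. of_nat (n choose j) * c (n - j))"
  proof (rule sum.cong[OF refl])
    fix j :: nat assume "j \<in> {1..n}"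
    then have "{S. S \<in> ?P \<and> card S = j} = {S. S \<subseteq> {..<n} \<and> card S = j}"
      by auto
    then show "(\<Sum>S | S \<in> ?P \<and> card S = j. c (n - card S)) = of_nat (n choose j) * c (n - j)"
      using n_subsets[of "{..<n}" j] by simp
  qed
  also have "\<dots> = (\<Sum>k<n. of_nat (n choose k) * c k)"
    by (rule sum.reindex_bij_witness[of _ "\<lambda>k. n - k" "\<lambda>j. n - j"])
      (auto simp flip: binomial_symmetric)
  finally show ?thesis .
qed

lemma sum_nonempty_subsets_le:
  fixes f :: "nat set \<Rightarrow> real"
  assumes "\<And>S. S \<in> Pow {..<n} - {{}} \<Longrightarrow> f S \<le> c (n - card S)" and "\<And>k. 0 \<le> c k"
  shows "(\<Sum>S\<in>Pow {..<n} - {{}}. f S) \<le> (\<Sum>k<n. (exp 1 * real n / real k) ^ k * c k)"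
proof -
  have "(\<Sum>S\<in>Pow {..<n} - {{}}. f S) \<le> (\<Sum>S\<in>Pow {..<n} - {{}}. c (n - card S))"
    by (rule sum_mono) (rule assms(1))
  also have "\<dots> = (\<Sum>k<n. real (n choose k) * c k)"
    by (rule sum_nonempty_subsets_by_card)
  also have "\<dots> \<le> (\<Sum>k<n. (exp 1 * real n / real k) ^ k * c k)"
    by (intro sum_mono mult_right_mono binomial_le_exp_pow assms(2))
  finally show ?thesis .
qed

lemma sig_norm_volt_conv_diff_le:
  fixes c :: "nat \<Rightarrow> nat \<Rightarrow> real"
  assumes "0 < n" "finite {\<tau>\<in>lattice n. H \<tau> \<noteq> 0}" "finite {t. x t \<noteq> 0}" "finite {t. y t \<noteq> 0}"
    and bound: "\<And>S T. S \<subseteq> {..<n} \<Longrightarrow> S \<noteq> {} \<Longrightarrow> finite T \<Longrightarrow>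
      L2_set (multiconv n {\<tau>\<in>lattice n. H \<tau> \<noteq> 0} H (\<lambda>i. if i \<in> S then y else x)) T
        \<le> K * c (n - card S) (card S)"
    and "0 \<le> K" "\<And>k m. 0 \<le> c k m"
  shows "sig_norm 2 (\<lambda>t. volt_conv n H (\<lambda>s. x s + y s) t - volt_conv n H x t)
    \<le> K * (\<Sum>k<n. (exp 1 * real n / real k) ^ k * c k (n - k))"
proof -
  define A where "A = {\<tau>\<in>lattice n. H \<tau> \<noteq> 0}"
  define Z where "Z = {t. x t \<noteq> 0} \<union> {t. y t \<noteq> 0}"
  define T where "T = (\<lambda>(\<tau>, s). s + \<tau> ! 0) ` (A \<times> Z)"
  define D where "D = (\<lambda>t. volt_conv n H (\<lambda>s. x s + y s) t - volt_conv n H x t)"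
  have "finite T"
    using assms(2-4) by (simp add: T_def A_def Z_def)
  have D_eq: "D t = multiconv n A H (\<lambda>_ s. x s + y s) t - multiconv n A H (\<lambda>_. x) t" for t
    using assms(2) by (simp add: D_def A_def volt_conv_eq_multiconv)
  have "multiconv n A H z t = 0" if "t \<notin> T" "\<And>s. s \<notin> Z \<Longrightarrow> z 0 s = 0" for z t
    using assms(1) that by (intro multiconv_eq_0_outside[of n Z]) (auto simp: T_def)
  then have "D t = 0" if "t \<notin> T" for t
    using that by (simp add: D_eq Z_def)
  then have "sig_norm 2 D = L2_set D T"
    using \<open>finite T\<close> by (intro sig_norm_2_eq_L2_set)
  also have "\<dots> \<le> (\<Sum>S\<in>Pow {..<n} - {{}}. L2_set (multiconv n A H (\<lambda>i. if i \<in> S then y else x)) T)"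
    unfolding D_eq multiconv_add_sub_expansion by (rule L2_set_sum_le)
  also have "\<dots> \<le> (\<Sum>k<n. (exp 1 * real n / real k) ^ k * (K * c k (n - k)))"
  proof (rule sum_nonempty_subsets_le)
    fix S assume "S \<in> Pow {..<n} - {{}}"
    moreover then have "n - (n - card S) = card S"
      by (metis Diff_iff PowD card_lessThan card_mono diff_diff_cancel finite_lessThan)
    ultimately show "L2_set (multiconv n A H (\<lambda>i. if i \<in> S then y else x)) T
        \<le> K * c (n - card S) (n - (n - card S))"
      using bound \<open>finite T\<close> by (simp add: A_def)
  qed (simp add: assms)
  finally show ?thesis
    by (simp add: D_def sum_distrib_left mult_ac)
qed

theorem lemma23:
  fixes n :: nat and H :: "int list \<Rightarrow> real" and x y :: "int \<Rightarrow> real"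
  assumes "n \<ge> 1"
    and "finite {\<tau>\<in>lattice n. H \<tau> \<noteq> 0}"
    and "finite {t. x t \<noteq> 0}"
    and "finite {t. y t \<noteq> 0}"
  shows "sig_norm 2 (\<lambda>t. volt_conv n H (\<lambda>s. x s + y s) t - volt_conv n H x t)
    \<le> min (ker_norm n 2 H * (\<Sum>k<n. (exp 1 * real n / real k) ^ k
                  * sig_norm 1 x ^ k * sig_norm 1 y ^ (n - k)))
          (ker_norm n 1 H * (\<Sum>k<n. (exp 1 * real n / real k) ^ k
                  * sig_norm (2 * real k) x ^ k * sig_norm (2 * real (n - k)) y ^ (n - k)))"
proof -
  have "0 < n"
    using assms(1) by simp
  have "sig_norm 2 (\<lambda>t. volt_conv n H (\<lambda>s. x s + y s) t - volt_conv n H x t)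
      \<le> ker_norm n 2 H * (\<Sum>k<n. (exp 1 * real n / real k) ^ k * (sig_norm 1 x ^ k * sig_norm 1 y ^ (n - k)))"
    using \<open>0 < n\<close> assms(2-4)
    by (intro sig_norm_volt_conv_diff_le L2_set_multiconv_select_le_ker_norm_2)
      (simp_all add: ker_norm_nonneg sig_norm_nonneg)
  moreover have "sig_norm 2 (\<lambda>t. volt_conv n H (\<lambda>s. x s + y s) t - volt_conv n H x t)
      \<le> ker_norm n 1 H * (\<Sum>k<n. (exp 1 * real n / real k) ^ k
          * (sig_norm (2 * real k) x ^ k * sig_norm (2 * real (n - k)) y ^ (n - k)))"
    using \<open>0 < n\<close> assms(2-4)
    by (intro sig_norm_volt_conv_diff_le L2_set_multiconv_select_le_ker_norm_1)
      (simp_all add: ker_norm_nonneg sig_norm_nonneg)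
  ultimately show ?thesis
    by (simp add: mult.assoc)
qed

end
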